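(* Let $p,t\in\mathbb{R}$ and define, for $n\ge 0$, \[ a_n(p,t)=t\binom{np+1}{n}\frac{1}{np+1}+2(1-t)\binom{np+2}{n}\frac{1}{np+2}. \] If the sequence $(a_n(p,t))_{n\ge0}$ is positive definite, then \[ 2p-pt-t^2+3t-3\ge 0 . \] In particular $t\neq 2$, and either $p\le -3$ or $p\ge 1$.
   Context: For real $p,r$, the two-parameter Fuss (Raney) number $\binom{np+r}{n}\frac{r}{np+r}$ is defined to be $1$ for $n=0$ and $\frac{r}{n!}\prod_{i=1}^{n-1}(np+r-i)$ for $n\ge1$; the definition of $a_n(p,t)$ uses this convention with $r=1$ and $r=2$. A real sequence $(a_n)_{n\ge0}$ is called positive definite if $\sum_{i,j=0}^{m} a_{i+j}c_i\overline{c_j}\ge0$ for all $m$ and all $c_0,\dots,c_m\in\mathbb{C}$, equivalently if it is the moment sequence of a positive Borel measure on $\mathbb{R}$. *)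

theory Defs
  imports Complex_Main "HOL-Library.Complex_Order"
begin

text \<open>Two-parameter Fuss (Raney) number binom(np+r,n) r/(np+r), with the convention
  1 for n = 0 and r/n! prod_{i=1}^{n-1} (np+r-i) for n >= 1.\<close>
definition raney :: "real \<Rightarrow> real \<Rightarrow> nat \<Rightarrow> real" where
  "raney p r n = (if n = 0 then 1
     else r / fact n * (\<Prod>i = 1..n - 1. real n * p + r - real i))"

text \<open>a_n(p,t) = t * R(p,1,n) + (1-t) * R(p,2,n), i.e.
  t binom(np+1,n)/(np+1) + 2(1-t) binom(np+2,n)/(np+2).\<close>
definition a_seq :: "real \<Rightarrow> real \<Rightarrow> nat \<Rightarrow> real" where
  "a_seq p t n = t * raney p 1 n + (1 - t) * raney p 2 n"

definition pos_def_seq :: "(nat \<Rightarrow> real) \<Rightarrow> bool" where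
  "pos_def_seq a \<longleftrightarrow> (\<forall>m (c :: nat \<Rightarrow> complex).
     (\<Sum>i\<le>m. \<Sum>j\<le>m. complex_of_real (a (i + j)) * c i * cnj (c j)) \<ge> 0)"

end

theory Submission
  imports Defs
begin

text \<open>Testing positive definiteness with the vector (x, 1) shows that the quadratic
  a_0 x^2 + 2 a_1 x + a_2 is nonnegative; for a_0 = 1 its minimum at x = -a_1 gives the
  Hankel inequality a_1^2 \<le> a_2. For a(p,t) the difference a_2 - a_1^2 is exactly
  2p - pt - t^2 + 3t - 3, and the remaining claims are elementary consequences.\<close>

lemma pos_def_seq_quadratic_nonneg:
  fixes a :: "nat \<Rightarrow> real" and x :: real
  assumes "pos_def_seq a"
  shows "a 0 * x\<^sup>2 + 2 * a 1 * x + a 2 \<ge> 0"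
proof -
  define c :: "nat \<Rightarrow> complex" where "c = (\<lambda>i. if i = 0 then complex_of_real x else 1)"
  have "(\<Sum>i\<le>1. \<Sum>j\<le>1. complex_of_real (a (i + j)) * c i * cnj (c j)) \<ge> 0"
    using assms unfolding pos_def_seq_def by blast
  also have "(\<Sum>i\<le>1. \<Sum>j\<le>1. complex_of_real (a (i + j)) * c i * cnj (c j))
      = complex_of_real (a 0 * x\<^sup>2 + 2 * a 1 * x + a 2)"
    by (simp add: c_def numeral_2_eq_2 power2_eq_square algebra_simps)
  finally show ?thesis
    by (simp add: less_eq_complex_def)
qed

lemma pos_def_seq_hankel_2:
  fixes a :: "nat \<Rightarrow> real"
  assumes "pos_def_seq a" and "a 0 = 1"
  shows "(a 1)\<^sup>2 \<le> a 2"
  using pos_def_seq_quadratic_nonneg[OF assms(1), of "- a 1"] assms(2)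
  by (simp add: power2_eq_square)

lemma a_seq_0: "a_seq p t 0 = 1"
  and a_seq_1: "a_seq p t 1 = 2 - t"
  and a_seq_2: "a_seq p t 2 = 2 * p + 1 - p * t - t"
  by (simp_all add: a_seq_def raney_def numeral_2_eq_2 algebra_simps)

text \<open>With s = 2 - t the hypothesis reads p s \<ge> s^2 - s + 1 > 0, so s \<noteq> 0 and
  p is on the same side as s - 1 + 1/s, which is \<ge> 1 for s > 0 and \<le> -3 for s < 0.\<close>
lemma hankel_bound_consequences:
  fixes p t :: real
  assumes "2 * p - p * t - t ^ 2 + 3 * t - 3 \<ge> 0"
  shows "t \<noteq> 2" and "p \<le> -3 \<or> p \<ge> 1"
proof -
  define s where "s = 2 - t"
  have key: "p * s \<ge> s\<^sup>2 - s + 1"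
    using assms unfolding s_def by (simp add: power2_eq_square algebra_simps)
  have "s\<^sup>2 - s + 1 > 0"
    using zero_le_power2[of "s - 1/2"] by (simp add: power2_eq_square algebra_simps)
  with key have "s \<noteq> 0" by auto
  then show "t \<noteq> 2" by (simp add: s_def)
  show "p \<le> -3 \<or> p \<ge> 1"
  proof (cases "s > 0")
    case True
    have "s\<^sup>2 - s + 1 \<ge> 1 * s"
      using zero_le_power2[of "s - 1"] by (simp add: power2_eq_square algebra_simps)
    with key have "p * s \<ge> 1 * s" by linarith
    with True show ?thesis by simp
  next
    case False
    with \<open>s \<noteq> 0\<close> have "s < 0" by simp
    have "s\<^sup>2 - s + 1 \<ge> -3 * s"
      using zero_le_power2[of "s + 1"] by (simp add: power2_eq_square algebra_simps)
    with key have "p * s \<ge> (-3) * s" by linarith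
    with \<open>s < 0\<close> have "p \<le> -3" by (simp only: mult_le_cancel_right_neg)
    then show ?thesis ..
  qed
qed

theorem mainTheorem1:
  fixes p t :: real
  assumes "pos_def_seq (a_seq p t)"
  shows "2 * p - p * t - t ^ 2 + 3 * t - 3 \<ge> 0 \<and> t \<noteq> 2 \<and> (p \<le> -3 \<or> p \<ge> 1)"
proof -
  have "(2 - t)\<^sup>2 \<le> 2 * p + 1 - p * t - t"
    using pos_def_seq_hankel_2[OF assms a_seq_0] unfolding a_seq_1 a_seq_2 .
  then have bound: "2 * p - p * t - t ^ 2 + 3 * t - 3 \<ge> 0"
    by (simp add: power2_eq_square algebra_simps)
  with hankel_bound_consequences[OF bound] show ?thesis by blast
qed

end
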